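(* For any positive integer $n$, $$\frac{3}{2}\sum_{k=1}^{n}\frac{1}{k}\binom{2k}{k}=\sum_{k=1}^{n}\frac{1}{k}\binom{n+k}{k}+H_n(1),$$ $$\sum_{k=1}^n\binom{2k}{k}\left(\frac{3H_k(1)}{2k}-\frac{1}{k^2}\right)=\sum_{k=1}^{n}\binom{n+k}{k}\frac{H_k(1)}{k}-H_n(2),$$ $$\sum_{k=1}^n\binom{2k}{k}\left(\frac{3H_k(2)}{k}-\frac{1}{2k^3}\right)=\sum_{k=1}^{n}\binom{n+k}{k}\frac{H_k(2)+H_n(2)}{k}+H_n(2)H_n(1)-H_n(1,2).$$
   Context: For positive integers $s$, $H_n(s)=\sum_{j=1}^n j^{-s}$, and $H_n(1,2)=\sum_{1\le i<j\le n}\frac{1}{i\,j^2}$. *)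

theory Defs
  imports Complex_Main
begin

definition harm :: "nat \<Rightarrow> nat \<Rightarrow> real" where
  "harm s n = (\<Sum>j=1..n. 1 / real j ^ s)"

definition harm12 :: "nat \<Rightarrow> real" where
  "harm12 n = (\<Sum>j=1..n. \<Sum>i=1..<j. 1 / (real i * real j ^ 2))"

end

theory Submission
  imports Defs
begin

text \<open>Write B(n,k) = C(n+k,k) and W_b(n) = \<Sum>_{k=1..n} B(n,k) b_k / k. Since
  B(n+1,k)/k = B(n,k)/k + B(n,k)/(n+1), the increment W_b(n+1) - W_b(n) is
  B(n,n+1) b_{n+1}/(n+1) plus (1/(n+1)) \<Sum>_{k=1..n+1} B(n,k) b_k. For b = 1, H(1), H(2)
  the latter sum is evaluated by Abel summation against the hockey-stick identity
  \<Sum>_{k=1..m} B(n,k) = B(n+1,m) - 1, and B(n,n+1) = C(2n+2,n+1)/2. So each increment is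
  expressed through the central binomial coefficient C(2n+2,n+1) and harmonic numbers, and
  the three identities follow by telescoping.\<close>

definition lattice_paths :: "nat \<Rightarrow> nat \<Rightarrow> real" where
  "lattice_paths n k = real ((n + k) choose k)"

lemma lattice_paths_0_right [simp]: "lattice_paths n 0 = 1"
  by (simp add: lattice_paths_def)

lemma lattice_paths_Suc_Suc:
  "lattice_paths (Suc n) (Suc k) = lattice_paths n (Suc k) + lattice_paths (Suc n) k"
  by (simp add: lattice_paths_def add.commute)

lemma lattice_paths_Suc_left:
  "real (Suc n) * lattice_paths (Suc n) k = real (Suc n + k) * lattice_paths n k"
proof -
  have "Suc n * (Suc n + k choose k) = (Suc n + k) * (n + k choose k)"
    by (metis Suc_times_binomial Suc_times_binomial_add add.commute add_Suc)
  then show ?thesis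
    unfolding lattice_paths_def of_nat_mult[symmetric] by simp
qed

lemma lattice_paths_Suc_right:
  "real (Suc k) * lattice_paths n (Suc k) = real (Suc n) * lattice_paths (Suc n) k"
  using lattice_paths_Suc_left[of n "Suc k"] lattice_paths_Suc_Suc[of n k]
  by (simp add: algebra_simps)

lemma lattice_paths_Suc_diag:
  "lattice_paths n (Suc n) = lattice_paths (Suc n) (Suc n) / 2"
proof -
  have "lattice_paths n (Suc n) = lattice_paths (Suc n) n"
    using lattice_paths_Suc_right[of n n] by (simp del: of_nat_Suc)
  then show ?thesis
    using lattice_paths_Suc_Suc[of n n] by simp
qed

lemma sum_lattice_paths: "(\<Sum>k=1..m. lattice_paths n k) = lattice_paths (Suc n) m - 1"
  by (induction m) (simp_all add: lattice_paths_Suc_Suc)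

lemma sum_lattice_paths_mult_partial_sums:
  "(\<Sum>k=1..m. lattice_paths n k * (\<Sum>j=1..k. f j))
     = lattice_paths (Suc n) m * (\<Sum>j=1..m. f j)
       - (\<Sum>k=1..m. real k * f k * lattice_paths n k) / real (Suc n)"
proof (induction m)
  case 0
  show ?case by simp
next
  case (Suc m)
  have shift: "lattice_paths (Suc n) m * f (Suc m)
      = f (Suc m) * (real (Suc m) * lattice_paths n (Suc m)) / real (Suc n)"
    unfolding lattice_paths_Suc_right by (simp del: of_nat_Suc)
  show ?case
    using Suc.IH shift
    by (simp add: lattice_paths_Suc_Suc add_divide_distrib algebra_simps del: of_nat_Suc)
qed

lemma sum_lattice_paths_mult_harm:
  assumes "s \<ge> 1"
  shows "(\<Sum>k=1..m. lattice_paths n k * harm s k)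
     = lattice_paths (Suc n) m * harm s m
       - (\<Sum>k=1..m. lattice_paths n k / real k ^ (s - 1)) / real (Suc n)"
proof -
  have "real k * (1 / real k ^ s) * lattice_paths n k = lattice_paths n k / real k ^ (s - 1)"
    if "k \<ge> 1" for k
    using that assms by (cases s) auto
  then show ?thesis
    unfolding harm_def sum_lattice_paths_mult_partial_sums by simp
qed

definition weighted_lattice_sum :: "(nat \<Rightarrow> real) \<Rightarrow> nat \<Rightarrow> real" where
  "weighted_lattice_sum b n = (\<Sum>k=1..n. lattice_paths n k * b k / real k)"

lemma weighted_lattice_sum_Suc:
  "weighted_lattice_sum b (Suc n)
     = weighted_lattice_sum b n
       + lattice_paths (Suc n) (Suc n) * b (Suc n) / (2 * real (Suc n))
       + (\<Sum>k=1..Suc n. lattice_paths n k * b k) / real (Suc n)"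
proof -
  have split: "lattice_paths (Suc n) k * b k / real k
      = lattice_paths n k * b k / real k + lattice_paths n k * b k / real (Suc n)"
    if "k \<ge> 1" for k
  proof -
    have eq: "lattice_paths (Suc n) k = real (Suc n + k) * lattice_paths n k / real (Suc n)"
      using lattice_paths_Suc_left[of n k] by (simp add: eq_divide_eq ac_simps del: of_nat_Suc)
    from that show ?thesis
      unfolding eq by (simp add: field_simps)
  qed
  have "weighted_lattice_sum b (Suc n)
      = (\<Sum>k=1..Suc n. lattice_paths n k * b k / real k)
        + (\<Sum>k=1..Suc n. lattice_paths n k * b k) / real (Suc n)"
    unfolding weighted_lattice_sum_def sum_divide_distrib sum.distrib[symmetric]
    by (rule sum.cong) (simp_all add: split)
  then show ?thesis
    by (simp add: weighted_lattice_sum_def lattice_paths_Suc_diag del: of_nat_Suc)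
qed

lemma harm_Suc: "harm s (Suc n) = harm s n + 1 / real (Suc n) ^ s"
  by (simp add: harm_def del: of_nat_Suc)

lemma harm12_Suc: "harm12 (Suc n) = harm12 n + harm 1 n / real (Suc n) ^ 2"
  by (simp add: harm12_def harm_def sum_divide_distrib atLeastLessThanSuc_atLeastAtMost
      del: of_nat_Suc)

lemma weighted_lattice_sum_one:
  "weighted_lattice_sum (\<lambda>_. 1) n = 3/2 * (\<Sum>k=1..n. lattice_paths k k / real k) - harm 1 n"
proof (induction n)
  case 0
  show ?case by (simp add: weighted_lattice_sum_def harm_def)
next
  case (Suc n)
  let ?D = "lattice_paths (Suc n) (Suc n)"
  have "weighted_lattice_sum (\<lambda>_. 1) (Suc n)
      = weighted_lattice_sum (\<lambda>_. 1) n + ?D / (2 * real (Suc n)) + (?D - 1) / real (Suc n)"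
    unfolding weighted_lattice_sum_Suc mult_1_right sum_lattice_paths ..
  \<comment> \<open>Keeping real (Suc n) unexpanded lets the simplifier see that it is nonzero.\<close>
  then show ?case
    by (simp add: Suc.IH harm_Suc field_simps del: of_nat_Suc)
qed

lemma weighted_lattice_sum_harm1:
  "weighted_lattice_sum (harm 1) n
     = (\<Sum>k=1..n. lattice_paths k k * (3 * harm 1 k / (2 * real k) - 1 / real k ^ 2)) + harm 2 n"
proof (induction n)
  case 0
  show ?case by (simp add: weighted_lattice_sum_def harm_def)
next
  case (Suc n)
  let ?D = "lattice_paths (Suc n) (Suc n)"
  have "weighted_lattice_sum (harm 1) (Suc n)
      = weighted_lattice_sum (harm 1) n + ?D * harm 1 (Suc n) / (2 * real (Suc n))
        + (?D * harm 1 (Suc n) - (?D - 1) / real (Suc n)) / real (Suc n)"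
    unfolding weighted_lattice_sum_Suc sum_lattice_paths_mult_harm[of 1, OF order_refl]
    using sum_lattice_paths[of n "Suc n"] by (simp del: sum.cl_ivl_Suc)
  with Suc.IH show ?case
    by (simp add: harm_Suc[of 2] divide_simps del: of_nat_Suc) algebra
qed

lemma weighted_lattice_sum_harm2:
  "weighted_lattice_sum (harm 2) n
     = (\<Sum>k=1..n. lattice_paths k k * (3 * harm 2 k / real k - 1 / (2 * real k ^ 3)))
       - 3/2 * harm 2 n * (\<Sum>k=1..n. lattice_paths k k / real k) + harm12 n"
proof (induction n)
  case 0
  show ?case by (simp add: weighted_lattice_sum_def harm_def harm12_def)
next
  case (Suc n)
  let ?D = "lattice_paths (Suc n) (Suc n)"
  have "(\<Sum>k=1..Suc n. lattice_paths n k / real k)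
      = weighted_lattice_sum (\<lambda>_. 1) n + ?D / (2 * real (Suc n))"
    by (simp add: weighted_lattice_sum_def lattice_paths_Suc_diag del: of_nat_Suc)
  then have "weighted_lattice_sum (harm 2) (Suc n)
      = weighted_lattice_sum (harm 2) n + ?D * harm 2 (Suc n) / (2 * real (Suc n))
        + (?D * harm 2 (Suc n) - (3/2 * (\<Sum>k=1..n. lattice_paths k k / real k) - harm 1 n
             + ?D / (2 * real (Suc n))) / real (Suc n)) / real (Suc n)"
    unfolding weighted_lattice_sum_Suc sum_lattice_paths_mult_harm[of 2, OF one_le_numeral]
    by (simp add: weighted_lattice_sum_one)
  then show ?case
    by (simp add: Suc.IH harm_Suc[of 2] harm12_Suc divide_simps del: of_nat_Suc) algebra
qed

theorem mainTheorem3: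
  fixes n :: nat
  assumes "n \<ge> 1"
  shows "(3/2 * (\<Sum>k=1..n. 1 / real k * real ((2*k) choose k))
           = (\<Sum>k=1..n. 1 / real k * real ((n+k) choose k)) + harm 1 n)
    \<and> ((\<Sum>k=1..n. real ((2*k) choose k) * (3 * harm 1 k / (2 * real k) - 1 / real k ^ 2))
           = (\<Sum>k=1..n. real ((n+k) choose k) * harm 1 k / real k) - harm 2 n)
    \<and> ((\<Sum>k=1..n. real ((2*k) choose k) * (3 * harm 2 k / real k - 1 / (2 * real k ^ 3)))
           = (\<Sum>k=1..n. real ((n+k) choose k) * (harm 2 k + harm 2 n) / real k)
             + harm 2 n * harm 1 n - harm12 n)"
proof -
  have central: "real ((2*k) choose k) = lattice_paths k k" for k
    by (simp add: lattice_paths_def mult_2)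
  have one: "(\<Sum>k=1..n. 1 / real k * real ((n+k) choose k)) = weighted_lattice_sum (\<lambda>_. 1) n"
    by (simp add: weighted_lattice_sum_def lattice_paths_def)
  have harm1: "(\<Sum>k=1..n. real ((n+k) choose k) * harm 1 k / real k)
      = weighted_lattice_sum (harm 1) n"
    by (simp add: weighted_lattice_sum_def lattice_paths_def)
  have harm2: "(\<Sum>k=1..n. real ((n+k) choose k) * (harm 2 k + harm 2 n) / real k)
      = weighted_lattice_sum (harm 2) n + harm 2 n * weighted_lattice_sum (\<lambda>_. 1) n"
    by (simp add: weighted_lattice_sum_def lattice_paths_def sum_distrib_left
        sum.distrib add_divide_distrib algebra_simps)
  show ?thesis
    unfolding central one harm1 harm2 weighted_lattice_sum_one weighted_lattice_sum_harm1
      weighted_lattice_sum_harm2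
    by (simp add: algebra_simps)
qed

end
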